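(* Fix $p,t,n$ and a dropout distribution $\vec a$, and let $\Phi$ be any criterion satisfying (C.1)--(C.3). Then for every crossover design $d$ we have $\phi_0(d)\le\phi_1(d)$. Moreover, $e_0(d)\ge e_1(d)\,g(d)$ for every design $d$; in particular, if $d$ is $\phi_1$-optimal then $e_0(d)\ge g(d)$.
   Context: A crossover design $d$ with $p$ periods, $t$ treatments and $n$ subjects assigns treatment $d(k,u)\in\{1,\dots,t\}$ to subject $u$ in period $k$. Responses follow $Y_{dku}=\mu+\pi_k+\varsigma_u+\tau_{d(k,u)}+\gamma_{d(k-1,u)}+\varepsilon_{ku}$ (with $\gamma_{d(0,u)}=0$), errors independent with mean $0$, variance $1$. In vector form, with responses ordered subject by subject and within subject by period, $Y_d=1_{np}\mu+Z\pi+U\varsigma+T_d\tau+F_d\gamma+\varepsilon$, where $Z=1_n\otimes I_p$, $U=I_n\otimes 1_p$, $T_d$ is the $np\times t$ treatment incidence matrix (row $(u,k)$ is the indicator of $d(k,u)$) and $F_d$ the carryover incidence matrix (row $(u,1)$ zero, row $(u,k)$ the indicator of $d(k-1,u)$ for $k\ge2$). Subject dropout: $l_u\in\{1,\dots,p\}$ is the number of periods subject $u$ stays (no re-entry); $l_1,\dots,l_n$ are i.i.d., independent of the design and outcomes, with $P(l_u=k)=a_k$, $\vec a=(a_1,\dots,a_p)$. For integers $k\le i$, $I^k_{ij}$ is the $i\times j$ matrix whose upper-left $k\times k$ block is $I_k$ and other entries $0$. Let $M=\mathrm{diag}(I^{l_1}_{l_1p},\dots,I^{l_n}_{l_np})$,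 $\mathrm{pr}^\perp(G)=I-G(G'G)^-G'$ ($^-$ a generalized inverse, $[G_1|G_2]$ column concatenation), $O=M'\,\mathrm{pr}^\perp([MZ|MU])\,M$, $C_{d11}(l)=T_d'OT_d$, $C_{d12}(l)=T_d'OF_d=C_{d21}(l)'$, $C_{d22}(l)=F_d'OF_d$, and $C_d(\tau,l)=C_{d11}(l)-C_{d12}(l)C_{d22}(l)^-C_{d21}(l)$ (the information matrix for $\tau$ given dropout realization $l$). Let $C_{dij}=\mathbb E\,C_{dij}(l)$ (expectation over $l$) and $C_d=C_{d11}-C_{d12}C_{d22}^-C_{d21}$. A criterion $\Phi$ is a real function on $t\times t$ nonnegative definite matrices with (C.1) $\Phi$ concave; (C.2) $\Phi(S'CS)=\Phi(C)$ for every permutation matrix $S$; (C.3) $b\mapsto\Phi(bC)$ nondecreasing for $b>0$. Define $\phi_0(d)=\mathbb E\,\Phi(C_d(\tau,l))$ and $\phi_1(d)=\Phi(C_d)$. For $i=0,1$ let $d_i^*$ be a design maximizing $\phi_i$ over all designs with the given $p,t,n$, and $e_i(d)=\phi_i(d)/\phi_i(d_i^* )$; let $g(d)=\phi_0(d)/\phi_1(d)$. A design is $\phi_1$-optimal if it maximizes $\phi_1$. *)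

theory Defs
  imports Complex_Main "Jordan_Normal_Form.Matrix"
begin

(* Conventions: periods k in {1..p}, subjects u in {1..n}, treatments in {1..t}.
   A design is d :: nat => nat => nat, d k u = treatment of subject u in period k.
   Matrix rows are 0-based: row (u-1)*p + (k-1) corresponds to (subject u, period k);
   column j-1 corresponds to treatment j. *)

definition is_design :: "nat \<Rightarrow> nat \<Rightarrow> nat \<Rightarrow> (nat \<Rightarrow> nat \<Rightarrow> nat) \<Rightarrow> bool" where
  "is_design p t n d \<longleftrightarrow> (\<forall>k\<in>{1..p}. \<forall>u\<in>{1..n}. d k u \<in> {1..t})"

(* Z = 1_n \<otimes> I_p *)
definition Zmat :: "nat \<Rightarrow> nat \<Rightarrow> real mat" where
  "Zmat p n = mat (n*p) p (\<lambda>(r,c). if r mod p = c then 1 else 0)"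

(* U = I_n \<otimes> 1_p *)
definition Umat :: "nat \<Rightarrow> nat \<Rightarrow> real mat" where
  "Umat p n = mat (n*p) n (\<lambda>(r,c). if r div p = c then 1 else 0)"

definition Tmat :: "nat \<Rightarrow> nat \<Rightarrow> nat \<Rightarrow> (nat \<Rightarrow> nat \<Rightarrow> nat) \<Rightarrow> real mat" where
  "Tmat p t n d = mat (n*p) t (\<lambda>(r,c). if d (r mod p + 1) (r div p + 1) = c + 1 then 1 else 0)"

(* carryover incidence matrix F_d: first period row zero, otherwise indicator of d(k-1,u) *)
definition Fmat :: "nat \<Rightarrow> nat \<Rightarrow> nat \<Rightarrow> (nat \<Rightarrow> nat \<Rightarrow> nat) \<Rightarrow> real mat" where
  "Fmat p t n d = mat (n*p) t (\<lambda>(r,c). if 1 \<le> r mod p \<and> d (r mod p) (r div p + 1) = c + 1 then 1 else 0)"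

(* M = diag(I^{l_1}_{l_1 p}, ..., I^{l_n}_{l_n p}), block diagonal *)
definition Mmat :: "nat \<Rightarrow> nat \<Rightarrow> (nat \<Rightarrow> nat) \<Rightarrow> real mat" where
  "Mmat p n l = mat (\<Sum>u<n. l (Suc u)) (n*p)
     (\<lambda>(r,c). if \<exists>u<n. \<exists>k<l (Suc u). r = (\<Sum>v<u. l (Suc v)) + k \<and> c = u*p + k then 1 else 0)"

definition col_concat :: "real mat \<Rightarrow> real mat \<Rightarrow> real mat" where
  "col_concat A B = mat (dim_row A) (dim_col A + dim_col B)
     (\<lambda>(i,j). if j < dim_col A then A $$ (i,j) else B $$ (i, j - dim_col A))"

definition ginv :: "real mat \<Rightarrow> real mat" where
  "ginv A = (SOME G. G \<in> carrier_mat (dim_col A) (dim_row A) \<and> A * G * A = A)"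

definition pr_perp :: "real mat \<Rightarrow> real mat" where
  "pr_perp G = 1\<^sub>m (dim_row G) - G * ginv (transpose_mat G * G) * transpose_mat G"

definition Omat :: "nat \<Rightarrow> nat \<Rightarrow> (nat \<Rightarrow> nat) \<Rightarrow> real mat" where
  "Omat p n l = transpose_mat (Mmat p n l)
     * pr_perp (col_concat (Mmat p n l * Zmat p n) (Mmat p n l * Umat p n)) * Mmat p n l"

definition C11 where "C11 p t n d l = transpose_mat (Tmat p t n d) * Omat p n l * Tmat p t n d"
definition C12 where "C12 p t n d l = transpose_mat (Tmat p t n d) * Omat p n l * Fmat p t n d"
definition C21 where "C21 p t n d l = transpose_mat (Fmat p t n d) * Omat p n l * Tmat p t n d"
definition C22 where "C22 p t n d l = transpose_mat (Fmat p t n d) * Omat p n l * Fmat p t n d"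

definition Cinfo :: "nat \<Rightarrow> nat \<Rightarrow> nat \<Rightarrow> (nat \<Rightarrow> nat \<Rightarrow> nat) \<Rightarrow> (nat \<Rightarrow> nat) \<Rightarrow> real mat" where
  "Cinfo p t n d l = C11 p t n d l - C12 p t n d l * ginv (C22 p t n d l) * C21 p t n d l"

definition dropouts :: "nat \<Rightarrow> nat \<Rightarrow> (nat \<Rightarrow> nat) set" where
  "dropouts p n = PiE {1..n} (\<lambda>_. {1..p})"

definition dprob :: "nat \<Rightarrow> (nat \<Rightarrow> real) \<Rightarrow> (nat \<Rightarrow> nat) \<Rightarrow> real" where
  "dprob n a l = (\<Prod>u\<in>{1..n}. a (l u))"

definition is_dropout_dist :: "nat \<Rightarrow> (nat \<Rightarrow> real) \<Rightarrow> bool" where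
  "is_dropout_dist p a \<longleftrightarrow> (\<forall>k\<in>{1..p}. 0 \<le> a k) \<and> (\<Sum>k\<in>{1..p}. a k) = 1"

definition Emat :: "nat \<Rightarrow> nat \<Rightarrow> nat \<Rightarrow> (nat \<Rightarrow> real) \<Rightarrow> ((nat \<Rightarrow> nat) \<Rightarrow> real mat) \<Rightarrow> real mat" where
  "Emat p n m a C = mat m m (\<lambda>(i,j). \<Sum>l\<in>dropouts p n. dprob n a l * C l $$ (i,j))"

definition Cbar :: "nat \<Rightarrow> nat \<Rightarrow> nat \<Rightarrow> (nat \<Rightarrow> real) \<Rightarrow> (nat \<Rightarrow> nat \<Rightarrow> nat) \<Rightarrow> real mat" where
  "Cbar p t n a d = Emat p n t a (C11 p t n d) - Emat p n t a (C12 p t n d)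
      * ginv (Emat p n t a (C22 p t n d)) * Emat p n t a (C21 p t n d)"

definition phi0 :: "nat \<Rightarrow> nat \<Rightarrow> nat \<Rightarrow> (nat \<Rightarrow> real) \<Rightarrow> (real mat \<Rightarrow> real) \<Rightarrow> (nat \<Rightarrow> nat \<Rightarrow> nat) \<Rightarrow> real" where
  "phi0 p t n a \<Phi> d = (\<Sum>l\<in>dropouts p n. dprob n a l * \<Phi> (Cinfo p t n d l))"

definition phi1 :: "nat \<Rightarrow> nat \<Rightarrow> nat \<Rightarrow> (nat \<Rightarrow> real) \<Rightarrow> (real mat \<Rightarrow> real) \<Rightarrow> (nat \<Rightarrow> nat \<Rightarrow> nat) \<Rightarrow> real" where
  "phi1 p t n a \<Phi> d = \<Phi> (Cbar p t n a d)"

definition nnd :: "nat \<Rightarrow> real mat \<Rightarrow> bool" where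
  "nnd t A \<longleftrightarrow> A \<in> carrier_mat t t \<and> transpose_mat A = A \<and>
     (\<forall>x \<in> carrier_vec t. 0 \<le> x \<bullet> (A *\<^sub>v x))"

definition perm_mat :: "nat \<Rightarrow> real mat \<Rightarrow> bool" where
  "perm_mat t S \<longleftrightarrow> (\<exists>\<sigma>. bij_betw \<sigma> {..<t} {..<t} \<and>
     S = mat t t (\<lambda>(i,j). if \<sigma> i = j then 1 else 0))"

(* criterion: (C.1) concave, (C.2) permutation invariant, (C.3) b \<mapsto> \<Phi>(bC) nondecreasing *)
definition is_criterion :: "nat \<Rightarrow> (real mat \<Rightarrow> real) \<Rightarrow> bool" where
  "is_criterion t \<Phi> \<longleftrightarrow>
     (\<forall>A B w. nnd t A \<longrightarrow> nnd t B \<longrightarrow> 0 \<le> w \<longrightarrow> w \<le> 1 \<longrightarrow>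
        w * \<Phi> A + (1 - w) * \<Phi> B \<le> \<Phi> (w \<cdot>\<^sub>m A + (1 - w) \<cdot>\<^sub>m B)) \<and>
     (\<forall>C S. nnd t C \<longrightarrow> perm_mat t S \<longrightarrow> \<Phi> (transpose_mat S * C * S) = \<Phi> C) \<and>
     (\<forall>C b b'. nnd t C \<longrightarrow> 0 < b \<longrightarrow> b \<le> b' \<longrightarrow> \<Phi> (b \<cdot>\<^sub>m C) \<le> \<Phi> (b' \<cdot>\<^sub>m C))"

definition is_optimal :: "nat \<Rightarrow> nat \<Rightarrow> nat \<Rightarrow> ((nat \<Rightarrow> nat \<Rightarrow> nat) \<Rightarrow> real) \<Rightarrow> (nat \<Rightarrow> nat \<Rightarrow> nat) \<Rightarrow> bool" where
  "is_optimal p t n \<phi> d \<longleftrightarrow> is_design p t n d \<and> (\<forall>d'. is_design p t n d' \<longrightarrow> \<phi> d' \<le> \<phi> d)"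

end

theory Submission
  imports Defs "Jordan_Normal_Form.Gauss_Jordan_Elimination"
begin

text \<open>Every information matrix \<open>C\<^sub>d(\<tau>, l)\<close> is the Schur complement
  \<open>C\<^sub>1\<^sub>1 - C\<^sub>1\<^sub>2 C\<^sub>2\<^sub>2\<^sup>- C\<^sub>2\<^sub>1\<close> of a nonnegative definite block matrix
  \<open>[T, F]\<^sup>T O [T, F]\<close>, and its quadratic form at \<open>x\<close> is the minimum over \<open>y\<close> of the
  block form at \<open>(x, y)\<close>. Minimizing after averaging over the dropout pattern \<open>l\<close> gives at
  least the average of the minima, so \<open>C\<^sub>d - E C\<^sub>d(\<tau>, l)\<close> is nonnegative definite.
  Jensen's inequality for the concave criterion gives \<open>\<phi>\<^sub>0(d) \<le> \<Phi>(E C\<^sub>d(\<tau>, l))\<close>, and a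
  concave criterion bounded below is monotone in the Loewner order, whence
  \<open>\<phi>\<^sub>0(d) \<le> \<phi>\<^sub>1(d)\<close>. The efficiency bounds are then elementary inequalities between
  \<open>\<phi>\<^sub>0(d) \<le> \<phi>\<^sub>0(d\<^sub>0\<^sup>*) \<le> \<phi>\<^sub>1(d\<^sub>0\<^sup>*) \<le> \<phi>\<^sub>1(d\<^sub>1\<^sup>*)\<close>.\<close>

lemma row_echelon_form_has_ginv:
  fixes R :: "'a::field mat"
  assumes R: "R \<in> carrier_mat nr nc" and ref: "row_echelon_form R"
  shows "\<exists>S \<in> carrier_mat nc nr. R * S * R = R"
proof -
  from ref obtain f where "pivot_fun R f nc"
    unfolding row_echelon_form_def using R by auto
  note piv = pivot_funD[OF carrier_matD(1)[OF R] this]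
  define S :: "'a mat" where "S = mat nc nr (\<lambda>(j,i). if f i < nc \<and> j = f i then 1 else 0)"
  have S: "S \<in> carrier_mat nc nr" unfolding S_def by auto
  have RS: "(R * S) $$ (i,i') = (if f i' < nc \<and> i = i' then 1 else 0)"
    if i: "i < nr" and i': "i' < nr" for i i'
  proof -
    have "(R * S) $$ (i,i') = (\<Sum>j<nc. R $$ (i,j) * S $$ (j,i'))"
      using R S i i' by (simp add: scalar_prod_def atLeast0LessThan)
    also have "\<dots> = (if f i' < nc then R $$ (i, f i') else 0)"
      using i' by (auto simp: S_def if_distrib[of "\<lambda>x. _ * x"] cong: if_cong)
    also have "\<dots> = (if f i' < nc \<and> i = i' then 1 else 0)"
      using piv(4)[OF i'] piv(5)[OF i' _ i] by auto
    finally show ?thesis .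
  qed
  have "R * S * R = R"
  proof (rule eq_matI)
    fix i k assume "i < dim_row R" "k < dim_col R"
    hence i: "i < nr" and k: "k < nc" using R by auto
    have "(R * S * R) $$ (i,k) = (\<Sum>i'<nr. (R * S) $$ (i,i') * R $$ (i',k))"
      using R S i k by (simp add: scalar_prod_def atLeast0LessThan del: assoc_mult_mat)
    also have "\<dots> = (\<Sum>i'<nr. if i' = i then (if f i < nc then R $$ (i,k) else 0) else 0)"
      by (rule sum.cong) (auto simp: RS i)
    also have "\<dots> = (if f i < nc then R $$ (i,k) else 0)" using i by simp
    also have "\<dots> = R $$ (i,k)"
      using piv(1)[OF i] piv(2)[OF i, of k] k by auto
    finally show "(R * S * R) $$ (i,k) = R $$ (i,k)" .
  qed (use R S in auto)
  with S show ?thesis by blast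
qed

lemma ginv_exists:
  fixes A :: "'a::field mat"
  shows "\<exists>G \<in> carrier_mat (dim_col A) (dim_row A). A * G * A = A"
proof -
  define nr nc where "nr = dim_row A" and "nc = dim_col A"
  have A: "A \<in> carrier_mat nr nc" unfolding nr_def nc_def by auto
  note gj = gauss_jordan_single[OF A refl]
  obtain P Q where RPA: "gauss_jordan_single A = P * A" and P: "P \<in> carrier_mat nr nr"
    and Q: "Q \<in> carrier_mat nr nr" and QP: "Q * P = 1\<^sub>m nr"
    using gj(4) by blast
  obtain S where S: "S \<in> carrier_mat nc nr" and RSR: "P * A * S * (P * A) = P * A"
    using row_echelon_form_has_ginv[OF gj(2,3)] unfolding RPA by blast
  have QPA: "Q * (P * A) = A"
  proof -
    have "Q * (P * A) = Q * P * A" by (rule assoc_mult_mat[OF Q P A, symmetric])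
    then show ?thesis using QP A by simp
  qed
  have "A * (S * P) * A = Q * (P * A) * (S * P) * A" by (simp only: QPA)
  also have "\<dots> = Q * (P * A * S * (P * A))"
  proof -
    have PA: "P * A \<in> carrier_mat nr nc" and SP: "S * P \<in> carrier_mat nc nr" using A P S by auto
    have PASP: "P * A * (S * P) \<in> carrier_mat nr nr" using PA SP by auto
    show ?thesis
      by (simp only: assoc_mult_mat[OF Q PA SP] assoc_mult_mat[OF Q PASP A]
          assoc_mult_mat[OF PA SP A] assoc_mult_mat[OF S P A] assoc_mult_mat[OF PA S PA])
  qed
  also have "\<dots> = A" by (simp only: RSR QPA)
  finally have "A * (S * P) * A = A" .
  moreover have "S * P \<in> carrier_mat (dim_col A) (dim_row A)" using S P by (simp add: nr_def nc_def)
  ultimately show ?thesis by blast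
qed

lemma ginv_carrier_mat: "ginv A \<in> carrier_mat (dim_col A) (dim_row A)"
  and mult_ginv_mult: "A * ginv A * A = A"
  using someI_ex[OF ginv_exists[of A, unfolded Bex_def]] unfolding ginv_def by auto

lemma mat_eq_by_mult_vec:
  fixes A B :: "'a::comm_ring_1 mat"
  assumes A: "A \<in> carrier_mat nr nc" and B: "B \<in> carrier_mat nr nc"
    and eq: "\<And>x. x \<in> carrier_vec nc \<Longrightarrow> A *\<^sub>v x = B *\<^sub>v x"
  shows "A = B"
proof (rule eq_matI)
  fix i j assume i: "i < dim_row B" and j: "j < dim_col B"
  have "A $$ (i,j) = (A *\<^sub>v unit_vec nc j) $ i" using A B i j by simp
  also have "\<dots> = B $$ (i,j)" using eq[of "unit_vec nc j"] B i j by simp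
  finally show "A $$ (i,j) = B $$ (i,j)" .
qed (use A B in auto)

lemma vec_minus_eq_0_iff:
  fixes a b :: "'a::ab_group_add vec"
  assumes "a \<in> carrier_vec n" "b \<in> carrier_vec n"
  shows "a - b = 0\<^sub>v n \<longleftrightarrow> a = b"
  using assms by (auto simp: vec_eq_iff)

lemma scalar_prod_self_nonneg: "0 \<le> (v::real vec) \<bullet> v"
  using conjugate_square_ge_0_vec[of v] by simp

lemma scalar_prod_self_eq_0_iff: "(v::real vec) \<in> carrier_vec n \<Longrightarrow> v \<bullet> v = 0 \<longleftrightarrow> v = 0\<^sub>v n"
  using conjugate_square_eq_0_vec[of v n] by simp

lemma scalar_prod_mult_mat_vec_transpose:
  fixes A :: "'a::comm_semiring_0 mat"
  assumes "A \<in> carrier_mat nr nc" "x \<in> carrier_vec nr" "y \<in> carrier_vec nc"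
  shows "x \<bullet> (A *\<^sub>v y) = (transpose_mat A *\<^sub>v x) \<bullet> y"
  using transpose_vec_mult_scalar[OF assms(1,3,2)] by simp

lemma scalar_prod_congruence:
  fixes \<Omega> X Y :: "real mat"
  assumes \<Omega>: "\<Omega> \<in> carrier_mat N N" and X: "X \<in> carrier_mat N r" and Y: "Y \<in> carrier_mat N s"
    and u: "u \<in> carrier_vec r" and v: "v \<in> carrier_vec s"
  shows "u \<bullet> ((transpose_mat X * \<Omega> * Y) *\<^sub>v v) = (X *\<^sub>v u) \<bullet> (\<Omega> *\<^sub>v (Y *\<^sub>v v))"
proof -
  have "(transpose_mat X * \<Omega> * Y) *\<^sub>v v = transpose_mat X *\<^sub>v (\<Omega> *\<^sub>v (Y *\<^sub>v v))"
    using \<Omega> X Y v by (simp add: assoc_mult_mat_vec[of _ r N _ s] assoc_mult_mat_vec[of _ r N _ N])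
  then show ?thesis
    using scalar_prod_mult_mat_vec_transpose[of "transpose_mat X" r N u] \<Omega> X Y u v by simp
qed

lemma transpose_congruence:
  fixes \<Omega> X Y :: "real mat"
  assumes \<Omega>: "\<Omega> \<in> carrier_mat N N" "transpose_mat \<Omega> = \<Omega>"
    and X: "X \<in> carrier_mat N r" and Y: "Y \<in> carrier_mat N s"
  shows "transpose_mat (transpose_mat X * \<Omega> * Y) = transpose_mat Y * \<Omega> * X"
proof -
  have "transpose_mat (transpose_mat X * \<Omega> * Y) = transpose_mat Y * transpose_mat (transpose_mat X * \<Omega>)"
    using X Y \<Omega> by (intro transpose_mult[of _ r N]) auto
  also have "transpose_mat (transpose_mat X * \<Omega>) = \<Omega> * X"
    using transpose_mult[of "transpose_mat X" r N \<Omega> N] \<Omega> X by simp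
  finally show ?thesis using X Y \<Omega> by (simp add: assoc_mult_mat[of _ s N _ N _ r])
qed

lemma nnd_one_mat: "nnd n (1\<^sub>m n)"
  unfolding nnd_def using scalar_prod_self_nonneg by auto

lemma nnd_add: "nnd m A \<Longrightarrow> nnd m B \<Longrightarrow> nnd m (A + B)"
  unfolding nnd_def
  by (auto simp: transpose_add add_mult_distrib_mat_vec[of _ m m] scalar_prod_add_distrib[of _ m])

lemma nnd_smult:
  assumes "nnd m A" "0 \<le> c"
  shows "nnd m (c \<cdot>\<^sub>m A)"
proof -
  have "transpose_mat (c \<cdot>\<^sub>m A) = c \<cdot>\<^sub>m transpose_mat A" by (rule eq_matI) auto
  moreover have "(c \<cdot>\<^sub>m A) *\<^sub>v x = c \<cdot>\<^sub>v (A *\<^sub>v x)" if "A \<in> carrier_mat m m" "x \<in> carrier_vec m" for x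
    by (rule eq_vecI) (use that in \<open>auto simp: scalar_prod_def sum_distrib_left mult.assoc\<close>)
  ultimately show ?thesis using assms unfolding nnd_def by auto
qed

lemma nnd_minusI:
  assumes M: "nnd m M" and N: "nnd m N"
    and le: "\<And>x. x \<in> carrier_vec m \<Longrightarrow> x \<bullet> (N *\<^sub>v x) \<le> x \<bullet> (M *\<^sub>v x)"
  shows "nnd m (M - N)"
  unfolding nnd_def
proof (intro conjI ballI)
  have Mc: "M \<in> carrier_mat m m" and Nc: "N \<in> carrier_mat m m" using M N by (auto simp: nnd_def)
  show "M - N \<in> carrier_mat m m" using Nc by (rule minus_carrier_mat)
  show "transpose_mat (M - N) = M - N" using transpose_minus[OF Mc Nc] M N by (simp add: nnd_def)
  fix x :: "real vec" assume x: "x \<in> carrier_vec m"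
  show "0 \<le> x \<bullet> ((M - N) *\<^sub>v x)"
    using le[OF x] Mc Nc x by (simp add: minus_mult_distrib_mat_vec[of _ m m] scalar_prod_minus_distrib[of _ m])
qed

lemma congruence_nnd:
  assumes \<Omega>: "nnd N \<Omega>" and X: "X \<in> carrier_mat N r"
  shows "nnd r (transpose_mat X * \<Omega> * X)"
  unfolding nnd_def
proof (intro conjI ballI)
  have \<Omega>c: "\<Omega> \<in> carrier_mat N N" and \<Omega>s: "transpose_mat \<Omega> = \<Omega>" using \<Omega> by (auto simp: nnd_def)
  show "transpose_mat X * \<Omega> * X \<in> carrier_mat r r" using \<Omega>c X by simp
  show "transpose_mat (transpose_mat X * \<Omega> * X) = transpose_mat X * \<Omega> * X"
    using transpose_congruence[OF \<Omega>c \<Omega>s X X] .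
  fix x :: "real vec" assume x: "x \<in> carrier_vec r"
  show "0 \<le> x \<bullet> ((transpose_mat X * \<Omega> * X) *\<^sub>v x)"
    using scalar_prod_congruence[OF \<Omega>c X X x x] \<Omega> X x by (simp add: nnd_def)
qed

abbreviation block_form :: "real mat \<Rightarrow> real mat \<Rightarrow> real mat \<Rightarrow> real vec \<Rightarrow> real vec \<Rightarrow> real" where
  "block_form A B D x y \<equiv> x \<bullet> (A *\<^sub>v x) + 2 * (x \<bullet> (B *\<^sub>v y)) + y \<bullet> (D *\<^sub>v y)"

definition schur_complement :: "real mat \<Rightarrow> real mat \<Rightarrow> real mat \<Rightarrow> real mat" where
  "schur_complement A B D = A - B * ginv D * transpose_mat B"

locale nnd_block =
  fixes A B D :: "real mat" and r s :: nat
  assumes A_carrier: "A \<in> carrier_mat r r" and B_carrier: "B \<in> carrier_mat r s"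
    and D_carrier: "D \<in> carrier_mat s s"
    and A_sym: "transpose_mat A = A" and D_sym: "transpose_mat D = D"
    and block_form_nonneg:
      "\<And>x y. x \<in> carrier_vec r \<Longrightarrow> y \<in> carrier_vec s \<Longrightarrow> 0 \<le> block_form A B D x y"
begin

lemma D_form_nonneg: "y \<in> carrier_vec s \<Longrightarrow> 0 \<le> y \<bullet> (D *\<^sub>v y)"
  using block_form_nonneg[OF zero_carrier_vec] A_carrier B_carrier by simp

lemma kernel_D_subset_kernel_B:
  assumes z: "z \<in> carrier_vec s" and Dz: "D *\<^sub>v z = 0\<^sub>v s"
  shows "B *\<^sub>v z = 0\<^sub>v r"
proof -
  define x where "x = B *\<^sub>v z"
  have x: "x \<in> carrier_vec r" unfolding x_def using B_carrier z by simp
  \<comment> \<open>as \<open>D z = 0\<close>, the form at \<open>(x, c z)\<close> is affine in \<open>c\<close> with slope \<open>2 x \<bullet> x\<close>\<close>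
  have "x \<bullet> x = 0"
  proof (rule ccontr)
    assume c: "x \<bullet> x \<noteq> 0"
    define c where "c = - (x \<bullet> (A *\<^sub>v x) + 1) / (2 * (x \<bullet> x))"
    have "block_form A B D x (c \<cdot>\<^sub>v z) = x \<bullet> (A *\<^sub>v x) + 2 * (c * (x \<bullet> x))"
      using x z Dz B_carrier D_carrier by (simp add: mult_mat_vec x_def[symmetric])
    also have "\<dots> = -1" using c by (simp add: c_def field_simps)
    finally show False using block_form_nonneg[OF x, of "c \<cdot>\<^sub>v z"] z by simp
  qed
  then have "x = 0\<^sub>v r" using scalar_prod_self_eq_0_iff[OF x] by blast
  then show ?thesis unfolding x_def .
qed

lemma B_ginv_transpose_D: "B * transpose_mat (ginv D) * D = B"
proof (rule mat_eq_by_mult_vec[of _ r s])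
  let ?H = "transpose_mat (ginv D)"
  have H: "?H \<in> carrier_mat s s" using ginv_carrier_mat[of D] D_carrier by simp
  have G: "ginv D \<in> carrier_mat s s" using ginv_carrier_mat[of D] D_carrier by simp
  have DG: "D * ginv D \<in> carrier_mat s s" using G D_carrier by simp
  have "D = transpose_mat (D * ginv D * D)" using mult_ginv_mult[of D] D_sym by simp
  also have "\<dots> = D * (?H * D)"
    by (simp only: transpose_mult[OF DG D_carrier] transpose_mult[OF D_carrier G] D_sym)
  finally have DHD: "D * ?H * D = D" unfolding assoc_mult_mat[OF D_carrier H D_carrier] by (rule sym)
  fix u :: "real vec" assume u: "u \<in> carrier_vec s"
  define z where "z = ?H *\<^sub>v (D *\<^sub>v u) - u"
  have z: "z \<in> carrier_vec s" unfolding z_def using H D_carrier u by simp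
  have "D *\<^sub>v z = (D * ?H * D) *\<^sub>v u - D *\<^sub>v u"
    unfolding z_def using H D_carrier u
    by (simp add: mult_minus_distrib_mat_vec assoc_mult_mat_vec[of _ s s _ s])
  then have "D *\<^sub>v z = 0\<^sub>v s" unfolding DHD using D_carrier u by simp
  then have "B *\<^sub>v (?H *\<^sub>v (D *\<^sub>v u)) - B *\<^sub>v u = 0\<^sub>v r"
    using kernel_D_subset_kernel_B[OF z] H D_carrier B_carrier u
    by (simp add: z_def mult_minus_distrib_mat_vec)
  then have "B *\<^sub>v (?H *\<^sub>v (D *\<^sub>v u)) = B *\<^sub>v u"
    using vec_minus_eq_0_iff[of "B *\<^sub>v (?H *\<^sub>v (D *\<^sub>v u))" r "B *\<^sub>v u"] H D_carrier B_carrier u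
    by simp
  then show "(B * ?H * D) *\<^sub>v u = B *\<^sub>v u"
    using H D_carrier B_carrier u by (simp add: assoc_mult_mat_vec[of _ r s _ s])
qed (use B_carrier D_carrier ginv_carrier_mat[of D] in auto)

lemma D_ginv_transpose_B: "D * ginv D * transpose_mat B = transpose_mat B"
proof -
  have G: "ginv D \<in> carrier_mat s s" using ginv_carrier_mat[of D] D_carrier by simp
  have Gt: "transpose_mat (ginv D) \<in> carrier_mat s s" using G by simp
  have Bt: "transpose_mat B \<in> carrier_mat s r" using B_carrier by simp
  have BH: "B * transpose_mat (ginv D) \<in> carrier_mat r s" using B_carrier G by simp
  have "transpose_mat B = transpose_mat (B * transpose_mat (ginv D) * D)"
    by (simp only: B_ginv_transpose_D)
  also have "\<dots> = D * (ginv D * transpose_mat B)"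
    by (simp only: transpose_mult[OF BH D_carrier] transpose_mult[OF B_carrier Gt]
        transpose_transpose D_sym)
  also have "\<dots> = D * ginv D * transpose_mat B"
    using assoc_mult_mat[OF D_carrier G Bt] by simp
  finally show ?thesis by (rule sym)
qed

lemma schur_complement_carrier: "schur_complement A B D \<in> carrier_mat r r"
  unfolding schur_complement_def using B_carrier D_carrier ginv_carrier_mat[of D]
  by (intro minus_carrier_mat) simp

lemma block_form_completion:
  assumes x: "x \<in> carrier_vec r" and y: "y \<in> carrier_vec s"
  defines "w \<equiv> ginv D *\<^sub>v (transpose_mat B *\<^sub>v x)"
  shows "block_form A B D x y = x \<bullet> (schur_complement A B D *\<^sub>v x) + (y + w) \<bullet> (D *\<^sub>v (y + w))"
proof -
  define v where "v = transpose_mat B *\<^sub>v x"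
  have G: "ginv D \<in> carrier_mat s s" using ginv_carrier_mat[of D] D_carrier by simp
  have Bt: "transpose_mat B \<in> carrier_mat s r" using B_carrier by simp
  have v: "v \<in> carrier_vec s" and w: "w \<in> carrier_vec s"
    unfolding v_def w_def using Bt G x by auto
  have Dw: "D *\<^sub>v w = v"
    using arg_cong[OF D_ginv_transpose_B, of "\<lambda>M. M *\<^sub>v x"] D_carrier G Bt x
    by (simp add: assoc_mult_mat_vec[of _ s s _ r] w_def v_def)
  have xB: "x \<bullet> (B *\<^sub>v u) = v \<bullet> u" if u: "u \<in> carrier_vec s" for u
    using scalar_prod_mult_mat_vec_transpose[OF B_carrier x u] unfolding v_def .
  have wD: "w \<bullet> (D *\<^sub>v u) = v \<bullet> u" if u: "u \<in> carrier_vec s" for u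
    using scalar_prod_mult_mat_vec_transpose[OF D_carrier w u] D_sym Dw by simp
  have schur: "x \<bullet> (schur_complement A B D *\<^sub>v x) = x \<bullet> (A *\<^sub>v x) - v \<bullet> w"
  proof -
    have "(B * ginv D * transpose_mat B) *\<^sub>v x = B *\<^sub>v w"
      using B_carrier G Bt x by (simp add: assoc_mult_mat_vec[of _ r s _ r] w_def)
    then show ?thesis
      unfolding schur_complement_def using A_carrier B_carrier G Bt x w xB[OF w]
      by (simp add: minus_mult_distrib_mat_vec[of _ r r] scalar_prod_minus_distrib[of _ r])
  qed
  have "D *\<^sub>v (y + w) = D *\<^sub>v y + v"
    using D_carrier y w Dw by (simp add: mult_add_distrib_mat_vec[of _ s s])
  then have "(y + w) \<bullet> (D *\<^sub>v (y + w)) = y \<bullet> (D *\<^sub>v y) + y \<bullet> v + (w \<bullet> (D *\<^sub>v y) + w \<bullet> v)"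
    using D_carrier y w v
    by (simp add: add_scalar_prod_distrib[of _ s] scalar_prod_add_distrib[of _ s])
  also have "\<dots> = y \<bullet> (D *\<^sub>v y) + 2 * (v \<bullet> y) + v \<bullet> w"
    using wD[OF y] comm_scalar_prod[OF y v] comm_scalar_prod[OF w v] by simp
  finally show ?thesis using schur xB[OF y] by simp
qed

lemma schur_complement_form_le:
  assumes "x \<in> carrier_vec r" "y \<in> carrier_vec s"
  shows "x \<bullet> (schur_complement A B D *\<^sub>v x) \<le> block_form A B D x y"
  using block_form_completion[OF assms] D_form_nonneg[of "y + ginv D *\<^sub>v (transpose_mat B *\<^sub>v x)"]
    assms B_carrier D_carrier ginv_carrier_mat[of D] by simp

lemma schur_complement_form_eq:
  assumes x: "x \<in> carrier_vec r"
  shows "x \<bullet> (schur_complement A B D *\<^sub>v x)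
    = block_form A B D x (- (ginv D *\<^sub>v (transpose_mat B *\<^sub>v x)))"
proof -
  have "ginv D *\<^sub>v (transpose_mat B *\<^sub>v x) \<in> carrier_vec s"
    using x B_carrier D_carrier ginv_carrier_mat[of D] by simp
  then show ?thesis using block_form_completion[OF x, of "- (ginv D *\<^sub>v (transpose_mat B *\<^sub>v x))"]
    D_carrier by simp
qed

lemma schur_complement_sym: "transpose_mat (schur_complement A B D) = schur_complement A B D"
proof -
  let ?G = "ginv D" and ?Bt = "transpose_mat B"
  have G: "?G \<in> carrier_mat s s" using ginv_carrier_mat[of D] D_carrier by simp
  have Bt: "?Bt \<in> carrier_mat s r" using B_carrier by simp
  have Gt: "transpose_mat ?G \<in> carrier_mat s s" using G by simp
  have BH: "B * transpose_mat ?G \<in> carrier_mat r s" using B_carrier G by simp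
  have "B * ?G * ?Bt = B * transpose_mat ?G * D * ?G * ?Bt" by (simp only: B_ginv_transpose_D)
  also have "\<dots> = B * transpose_mat ?G * (D * ?G * ?Bt)"
    by (simp only: assoc_mult_mat[OF BH D_carrier G] assoc_mult_mat[OF BH mult_carrier_mat[OF D_carrier G] Bt]
        assoc_mult_mat[OF D_carrier G Bt])
  also have "\<dots> = B * transpose_mat ?G * ?Bt" by (simp only: D_ginv_transpose_B)
  also have "\<dots> = transpose_mat (B * ?G * ?Bt)"
    using G by (simp only: transpose_mult[OF mult_carrier_mat[OF B_carrier G] Bt]
        transpose_mult[OF B_carrier G] transpose_transpose assoc_mult_mat[OF B_carrier Gt Bt])
  finally have "transpose_mat (B * ?G * ?Bt) = B * ?G * ?Bt" by (rule sym)
  then show ?thesis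
    unfolding schur_complement_def using transpose_minus[OF A_carrier, of "B * ?G * ?Bt"] A_sym B_carrier G
    by simp
qed

lemma schur_complement_nnd: "nnd r (schur_complement A B D)"
  unfolding nnd_def
proof (intro conjI ballI schur_complement_carrier schur_complement_sym)
  fix x :: "real vec" assume x: "x \<in> carrier_vec r"
  have "ginv D *\<^sub>v (transpose_mat B *\<^sub>v x) \<in> carrier_vec s"
    using x B_carrier D_carrier ginv_carrier_mat[of D] by simp
  then show "0 \<le> x \<bullet> (schur_complement A B D *\<^sub>v x)"
    using schur_complement_form_eq[OF x] block_form_nonneg[OF x] by simp
qed

end

lemma nnd_block_congruence:
  assumes \<Omega>: "nnd N \<Omega>" and T: "T \<in> carrier_mat N r" and F: "F \<in> carrier_mat N s"
  shows "nnd_block (transpose_mat T * \<Omega> * T) (transpose_mat T * \<Omega> * F) (transpose_mat F * \<Omega> * F) r s"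
proof unfold_locales
  have \<Omega>c: "\<Omega> \<in> carrier_mat N N" and \<Omega>s: "transpose_mat \<Omega> = \<Omega>" using \<Omega> by (auto simp: nnd_def)
  show "transpose_mat T * \<Omega> * T \<in> carrier_mat r r" "transpose_mat T * \<Omega> * F \<in> carrier_mat r s"
    "transpose_mat F * \<Omega> * F \<in> carrier_mat s s" using \<Omega>c T F by auto
  show "transpose_mat (transpose_mat T * \<Omega> * T) = transpose_mat T * \<Omega> * T"
    "transpose_mat (transpose_mat F * \<Omega> * F) = transpose_mat F * \<Omega> * F"
    using transpose_congruence[OF \<Omega>c \<Omega>s T T] transpose_congruence[OF \<Omega>c \<Omega>s F F] by simp_all
  fix x y :: "real vec" assume x: "x \<in> carrier_vec r" and y: "y \<in> carrier_vec s"
  define u v where "u = T *\<^sub>v x" and "v = F *\<^sub>v y"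
  have u: "u \<in> carrier_vec N" and v: "v \<in> carrier_vec N" unfolding u_def v_def using T F x y by auto
  have "v \<bullet> (\<Omega> *\<^sub>v u) = u \<bullet> (\<Omega> *\<^sub>v v)"
    using scalar_prod_mult_mat_vec_transpose[OF \<Omega>c v u] comm_scalar_prod[OF _ u, of "\<Omega> *\<^sub>v v"] \<Omega>c \<Omega>s v
    by simp
  then have "(u + v) \<bullet> (\<Omega> *\<^sub>v (u + v))
      = block_form (transpose_mat T * \<Omega> * T) (transpose_mat T * \<Omega> * F) (transpose_mat F * \<Omega> * F) x y"
    unfolding scalar_prod_congruence[OF \<Omega>c T T x x] scalar_prod_congruence[OF \<Omega>c T F x y]
      scalar_prod_congruence[OF \<Omega>c F F y y] u_def[symmetric] v_def[symmetric]
    using \<Omega>c u v by (simp add: mult_add_distrib_mat_vec[of _ N N] add_scalar_prod_distrib[of _ N]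
        scalar_prod_add_distrib[of _ N])
  moreover have "0 \<le> (u + v) \<bullet> (\<Omega> *\<^sub>v (u + v))" using \<Omega> u v by (simp add: nnd_def)
  ultimately show "0 \<le> block_form (transpose_mat T * \<Omega> * T) (transpose_mat T * \<Omega> * F)
      (transpose_mat F * \<Omega> * F) x y" by simp
qed

lemma scalar_prod_mult_mat_vec_expand:
  fixes A :: "'a::comm_semiring_0 mat"
  assumes A: "A \<in> carrier_mat nr nc" and x: "x \<in> carrier_vec nr" and y: "y \<in> carrier_vec nc"
  shows "x \<bullet> (A *\<^sub>v y) = (\<Sum>i<nr. \<Sum>j<nc. x $ i * A $$ (i,j) * y $ j)"
proof -
  have "x \<bullet> (A *\<^sub>v y) = (\<Sum>i<nr. x $ i * (A *\<^sub>v y) $ i)"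
    unfolding scalar_prod_def using A by (simp add: atLeast0LessThan)
  also have "\<dots> = (\<Sum>i<nr. x $ i * (\<Sum>j<nc. A $$ (i,j) * y $ j))"
    using A y by (intro sum.cong refl) (simp add: scalar_prod_def atLeast0LessThan)
  finally show ?thesis by (simp add: sum_distrib_left mult.assoc)
qed

definition wsum_mat :: "nat \<Rightarrow> nat \<Rightarrow> 'i set \<Rightarrow> ('i \<Rightarrow> real) \<Rightarrow> ('i \<Rightarrow> real mat) \<Rightarrow> real mat" where
  "wsum_mat nr nc S w C = mat nr nc (\<lambda>(i,j). \<Sum>l\<in>S. w l * C l $$ (i,j))"

lemma dim_row_wsum_mat [simp]: "dim_row (wsum_mat nr nc S w C) = nr"
  and dim_col_wsum_mat [simp]: "dim_col (wsum_mat nr nc S w C) = nc"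
  unfolding wsum_mat_def by simp_all

lemma wsum_mat_carrier [simp]: "wsum_mat nr nc S w C \<in> carrier_mat nr nc"
  by (simp add: carrier_matI)

lemma scalar_prod_wsum_mat:
  assumes C: "\<And>l. l \<in> S \<Longrightarrow> C l \<in> carrier_mat nr nc"
    and x: "x \<in> carrier_vec nr" and y: "y \<in> carrier_vec nc"
  shows "x \<bullet> (wsum_mat nr nc S w C *\<^sub>v y) = (\<Sum>l\<in>S. w l * (x \<bullet> (C l *\<^sub>v y)))"
proof -
  have "x \<bullet> (wsum_mat nr nc S w C *\<^sub>v y) = (\<Sum>i<nr. \<Sum>j<nc. \<Sum>l\<in>S. w l * (x $ i * C l $$ (i,j) * y $ j))"
    unfolding scalar_prod_mult_mat_vec_expand[OF wsum_mat_carrier x y]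
    by (intro sum.cong refl) (simp add: wsum_mat_def sum_distrib_left sum_distrib_right mult_ac)
  also have "\<dots> = (\<Sum>i<nr. \<Sum>l\<in>S. \<Sum>j<nc. w l * (x $ i * C l $$ (i,j) * y $ j))"
    by (intro sum.cong refl) (rule sum.swap)
  also have "\<dots> = (\<Sum>l\<in>S. \<Sum>i<nr. \<Sum>j<nc. w l * (x $ i * C l $$ (i,j) * y $ j))"
    by (rule sum.swap)
  also have "\<dots> = (\<Sum>l\<in>S. w l * (x \<bullet> (C l *\<^sub>v y)))"
    by (intro sum.cong refl) (simp add: scalar_prod_mult_mat_vec_expand[OF C x y] sum_distrib_left)
  finally show ?thesis .
qed

lemma transpose_wsum_mat:
  assumes "\<And>l. l \<in> S \<Longrightarrow> C l \<in> carrier_mat nr nc"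
  shows "transpose_mat (wsum_mat nr nc S w C) = wsum_mat nc nr S w (\<lambda>l. transpose_mat (C l))"
proof (rule eq_matI)
  have dims: "dim_row (C l) = nr" "dim_col (C l) = nc" if "l \<in> S" for l using assms[OF that] by auto
  fix i j assume "i < dim_row (wsum_mat nc nr S w (\<lambda>l. transpose_mat (C l)))"
    "j < dim_col (wsum_mat nc nr S w (\<lambda>l. transpose_mat (C l)))"
  then show "transpose_mat (wsum_mat nr nc S w C) $$ (i,j)
    = wsum_mat nc nr S w (\<lambda>l. transpose_mat (C l)) $$ (i,j)"
    by (simp add: wsum_mat_def dims cong: sum.cong)
qed (simp_all add: wsum_mat_def)

lemma wsum_mat_sym:
  assumes "\<And>l. l \<in> S \<Longrightarrow> C l \<in> carrier_mat m m" and "\<And>l. l \<in> S \<Longrightarrow> transpose_mat (C l) = C l"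
  shows "transpose_mat (wsum_mat m m S w C) = wsum_mat m m S w C"
proof -
  have "wsum_mat m m S w (\<lambda>l. transpose_mat (C l)) = wsum_mat m m S w C"
    using assms(2) by (simp add: wsum_mat_def cong: sum.cong)
  with transpose_wsum_mat[where C = C, OF assms(1)] show ?thesis by simp
qed

lemma wsum_mat_nnd:
  assumes w: "\<And>l. l \<in> S \<Longrightarrow> 0 \<le> w l" and C: "\<And>l. l \<in> S \<Longrightarrow> nnd m (C l)"
  shows "nnd m (wsum_mat m m S w C)"
  unfolding nnd_def
proof (intro conjI ballI wsum_mat_carrier)
  have Cc: "\<And>l. l \<in> S \<Longrightarrow> C l \<in> carrier_mat m m" using C by (auto simp: nnd_def)
  show "transpose_mat (wsum_mat m m S w C) = wsum_mat m m S w C"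
    using Cc C by (intro wsum_mat_sym[where C = C]) (auto simp: nnd_def)
  fix x :: "real vec" assume x: "x \<in> carrier_vec m"
  have "x \<bullet> (wsum_mat m m S w C *\<^sub>v x) = (\<Sum>l\<in>S. w l * (x \<bullet> (C l *\<^sub>v x)))"
    using Cc x x by (rule scalar_prod_wsum_mat)
  also have "0 \<le> \<dots>" using w C x by (auto simp: nnd_def intro!: sum_nonneg)
  finally show "0 \<le> x \<bullet> (wsum_mat m m S w C *\<^sub>v x)" .
qed

lemma wsum_mat_insert:
  assumes "finite F" "x \<notin> F" "C x \<in> carrier_mat m m" "sum w F \<noteq> 0"
  shows "wsum_mat m m (insert x F) w C
    = w x \<cdot>\<^sub>m C x + sum w F \<cdot>\<^sub>m wsum_mat m m F (\<lambda>l. w l / sum w F) C"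
  by (rule eq_matI) (use assms in \<open>auto simp: wsum_mat_def sum_distrib_left\<close>)

lemma nnd_block_wsum_mat:
  assumes w: "\<And>l. l \<in> S \<Longrightarrow> 0 \<le> w l" and blocks: "\<And>l. l \<in> S \<Longrightarrow> nnd_block (A l) (B l) (D l) r s"
  shows "nnd_block (wsum_mat r r S w A) (wsum_mat r s S w B) (wsum_mat s s S w D) r s"
proof unfold_locales
  note block = nnd_block.A_carrier[OF blocks] nnd_block.B_carrier[OF blocks] nnd_block.D_carrier[OF blocks]
    nnd_block.A_sym[OF blocks] nnd_block.D_sym[OF blocks]
  show "transpose_mat (wsum_mat r r S w A) = wsum_mat r r S w A"
    "transpose_mat (wsum_mat s s S w D) = wsum_mat s s S w D"
    using block by (auto intro: wsum_mat_sym[where C = A] wsum_mat_sym[where C = D])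
  fix x y :: "real vec" assume x: "x \<in> carrier_vec r" and y: "y \<in> carrier_vec s"
  have "block_form (wsum_mat r r S w A) (wsum_mat r s S w B) (wsum_mat s s S w D) x y
      = (\<Sum>l\<in>S. w l * block_form (A l) (B l) (D l) x y)"
    using scalar_prod_wsum_mat[where C = A, OF block(1) x x]
      scalar_prod_wsum_mat[where C = B, OF block(2) x y] scalar_prod_wsum_mat[where C = D, OF block(3) y y]
    by (simp add: sum.distrib sum_distrib_left algebra_simps)
  also have "0 \<le> \<dots>"
    using w nnd_block.block_form_nonneg[OF blocks x y] by (auto intro!: sum_nonneg)
  finally show "0 \<le> block_form (wsum_mat r r S w A) (wsum_mat r s S w B) (wsum_mat s s S w D) x y" .
qed simp_all

text \<open>Each Schur complement form is the minimum of its block form over \<open>y\<close>, and a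
  weighted sum of minima is at most the minimum of the weighted sum.\<close>

lemma schur_complement_wsum_mat_ge:
  assumes w: "\<And>l. l \<in> S \<Longrightarrow> 0 \<le> w l" and blocks: "\<And>l. l \<in> S \<Longrightarrow> nnd_block (A l) (B l) (D l) r s"
  shows "nnd r (schur_complement (wsum_mat r r S w A) (wsum_mat r s S w B) (wsum_mat s s S w D)
    - wsum_mat r r S w (\<lambda>l. schur_complement (A l) (B l) (D l)))"
proof (rule nnd_minusI)
  interpret avg: nnd_block "wsum_mat r r S w A" "wsum_mat r s S w B" "wsum_mat s s S w D" r s
    by (rule nnd_block_wsum_mat[OF w blocks])
  note block = nnd_block.A_carrier[OF blocks] nnd_block.B_carrier[OF blocks] nnd_block.D_carrier[OF blocks]
  show "nnd r (schur_complement (wsum_mat r r S w A) (wsum_mat r s S w B) (wsum_mat s s S w D))"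
    by (rule avg.schur_complement_nnd)
  show "nnd r (wsum_mat r r S w (\<lambda>l. schur_complement (A l) (B l) (D l)))"
    using w nnd_block.schur_complement_nnd[OF blocks]
    by (rule wsum_mat_nnd[where C = "\<lambda>l. schur_complement (A l) (B l) (D l)"])
  fix x :: "real vec" assume x: "x \<in> carrier_vec r"
  define y where "y = - (ginv (wsum_mat s s S w D) *\<^sub>v (transpose_mat (wsum_mat r s S w B) *\<^sub>v x))"
  have y: "y \<in> carrier_vec s"
    unfolding y_def using ginv_carrier_mat[of "wsum_mat s s S w D"] x
    by (auto intro!: mult_mat_vec_carrier)
  have "x \<bullet> (wsum_mat r r S w (\<lambda>l. schur_complement (A l) (B l) (D l)) *\<^sub>v x)
      = (\<Sum>l\<in>S. w l * (x \<bullet> (schur_complement (A l) (B l) (D l) *\<^sub>v x)))"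
    using nnd_block.schur_complement_carrier[OF blocks] x x
    by (rule scalar_prod_wsum_mat[where C = "\<lambda>l. schur_complement (A l) (B l) (D l)"])
  also have "\<dots> \<le> (\<Sum>l\<in>S. w l * block_form (A l) (B l) (D l) x y)"
    using w nnd_block.schur_complement_form_le[OF blocks x y] by (auto intro!: sum_mono mult_left_mono)
  also have "\<dots> = block_form (wsum_mat r r S w A) (wsum_mat r s S w B) (wsum_mat s s S w D) x y"
    using scalar_prod_wsum_mat[where C = A, OF block(1) x x]
      scalar_prod_wsum_mat[where C = B, OF block(2) x y] scalar_prod_wsum_mat[where C = D, OF block(3) y y]
    by (simp add: sum.distrib sum_distrib_left algebra_simps)
  also have "\<dots> = x \<bullet> (schur_complement (wsum_mat r r S w A) (wsum_mat r s S w B) (wsum_mat s s S w D) *\<^sub>v x)"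
    unfolding y_def by (rule avg.schur_complement_form_eq[OF x, symmetric])
  finally show "x \<bullet> (wsum_mat r r S w (\<lambda>l. schur_complement (A l) (B l) (D l)) *\<^sub>v x)
    \<le> x \<bullet> (schur_complement (wsum_mat r r S w A) (wsum_mat r s S w B) (wsum_mat s s S w D) *\<^sub>v x)" .
qed

lemma criterion_concave:
  assumes "is_criterion t \<Phi>" "nnd t A" "nnd t B" "0 \<le> w" "w \<le> 1"
  shows "w * \<Phi> A + (1 - w) * \<Phi> B \<le> \<Phi> (w \<cdot>\<^sub>m A + (1 - w) \<cdot>\<^sub>m B)"
  using assms unfolding is_criterion_def by blast

lemma criterion_jensen:
  assumes crit: "is_criterion t \<Phi>" and "finite S"
    and "\<And>l. l \<in> S \<Longrightarrow> 0 \<le> w l" and "sum w S = 1" and "\<And>l. l \<in> S \<Longrightarrow> nnd t (C l)"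
  shows "(\<Sum>l\<in>S. w l * \<Phi> (C l)) \<le> \<Phi> (wsum_mat t t S w C)"
  using assms(2-)
proof (induction S arbitrary: w rule: finite_induct)
  case empty
  then show ?case by simp
next
  case (insert x F)
  have Cx: "nnd t (C x)" and Cx_carrier: "C x \<in> carrier_mat t t"
    using insert.prems(3) by (auto simp: nnd_def)
  define s where "s = sum w F"
  have wx: "w x = 1 - s" using insert.hyps insert.prems(2) by (simp add: s_def)
  have s: "0 \<le> s" unfolding s_def using insert.prems(1) by (auto intro!: sum_nonneg)
  show ?case
  proof (cases "s = 0")
    case True
    then have "\<forall>l\<in>F. w l = 0" using insert.hyps(1) insert.prems(1) unfolding s_def
      by (subst (asm) sum_nonneg_eq_0_iff) auto
    moreover have "wsum_mat t t (insert x F) w C = C x"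
      by (rule eq_matI) (use insert.hyps Cx_carrier wx True \<open>\<forall>l\<in>F. w l = 0\<close> in \<open>auto simp: wsum_mat_def\<close>)
    ultimately show ?thesis using insert.hyps wx True by simp
  next
    case False
    let ?w' = "\<lambda>l. w l / s"
    let ?M = "wsum_mat t t F ?w' C"
    have w': "\<And>l. l \<in> F \<Longrightarrow> 0 \<le> ?w' l" using insert.prems(1) s by simp
    have IH: "(\<Sum>l\<in>F. ?w' l * \<Phi> (C l)) \<le> \<Phi> ?M"
      using insert.IH[of ?w'] w' insert.prems(3) False
      by (simp add: s_def sum_divide_distrib[symmetric])
    have M: "nnd t ?M" using w' insert.prems(3) by (intro wsum_mat_nnd) auto
    have "(\<Sum>l\<in>insert x F. w l * \<Phi> (C l)) = w x * \<Phi> (C x) + s * (\<Sum>l\<in>F. ?w' l * \<Phi> (C l))"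
      using insert.hyps False by (simp add: sum_distrib_left)
    also have "\<dots> \<le> w x * \<Phi> (C x) + (1 - w x) * \<Phi> ?M"
      using mult_left_mono[OF IH s] wx by simp
    also have "\<dots> \<le> \<Phi> (w x \<cdot>\<^sub>m C x + (1 - w x) \<cdot>\<^sub>m ?M)"
      using criterion_concave[OF crit Cx M, of "w x"] insert.prems(1)[of x] wx s by simp
    also have "w x \<cdot>\<^sub>m C x + (1 - w x) \<cdot>\<^sub>m ?M = wsum_mat t t (insert x F) w C"
      using wsum_mat_insert[where C = C and w = w, OF insert.hyps Cx_carrier] False wx by (simp add: s_def)
    finally show ?thesis .
  qed
qed

text \<open>A concave function that is bounded below on a ray cannot decrease along it.\<close>

lemma criterion_mono:
  assumes crit: "is_criterion t \<Phi>" and nonneg: "\<forall>C. nnd t C \<longrightarrow> 0 \<le> \<Phi> C"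
    and X: "nnd t X" and E: "nnd t E"
  shows "\<Phi> X \<le> \<Phi> (X + E)"
proof (rule ccontr)
  define g where "g = \<Phi> X - \<Phi> (X + E)"
  assume "\<not> \<Phi> X \<le> \<Phi> (X + E)"
  then have g: "0 < g" unfolding g_def by simp
  define c where "c = \<Phi> X / g + 1"
  have c: "1 \<le> c" unfolding c_def using nonneg X g by simp
  have cg: "c * g = \<Phi> X + g" unfolding c_def using g by (simp add: field_simps)
  have Y: "nnd t (X + c \<cdot>\<^sub>m E)" using nnd_add[OF X nnd_smult[OF E]] c by simp
  have "X + E = (1 / c) \<cdot>\<^sub>m (X + c \<cdot>\<^sub>m E) + (1 - 1 / c) \<cdot>\<^sub>m X"
    using X E c by (intro eq_matI) (auto simp: nnd_def field_simps)
  then have "(1 / c) * \<Phi> (X + c \<cdot>\<^sub>m E) + (1 - 1 / c) * \<Phi> X \<le> \<Phi> X - g"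
    using criterion_concave[OF crit Y X, of "1 / c"] c unfolding g_def by simp
  moreover have "0 \<le> (1 / c) * \<Phi> (X + c \<cdot>\<^sub>m E)" using nonneg Y c by simp
  ultimately have "g \<le> \<Phi> X / c" by (simp add: algebra_simps)
  then have "c * g \<le> \<Phi> X" using c by (simp add: field_simps)
  with cg g show False by simp
qed

text \<open>\<open>pr_perp G\<close> is the Schur complement of \<open>G\<^sup>T G\<close> in the Gram matrix of \<open>[I | G]\<close>.\<close>

lemma pr_perp_nnd:
  assumes G: "G \<in> carrier_mat m k"
  shows "nnd m (pr_perp G)"
proof -
  have "nnd_block (transpose_mat (1\<^sub>m m) * 1\<^sub>m m * 1\<^sub>m m) (transpose_mat (1\<^sub>m m) * 1\<^sub>m m * G)
      (transpose_mat G * 1\<^sub>m m * G) m k"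
    by (rule nnd_block_congruence[OF nnd_one_mat _ G]) simp
  then have "nnd_block (1\<^sub>m m) G (transpose_mat G * G) m k" using G by simp
  moreover have "pr_perp G = schur_complement (1\<^sub>m m) G (transpose_mat G * G)"
    unfolding pr_perp_def schur_complement_def using G by simp
  ultimately show ?thesis using nnd_block.schur_complement_nnd by simp
qed

lemma Omat_nnd: "nnd (n * p) (Omat p n l)"
  unfolding Omat_def
proof (rule congruence_nnd)
  show "Mmat p n l \<in> carrier_mat (\<Sum>u<n. l (Suc u)) (n * p)" unfolding Mmat_def by simp
  show "nnd (\<Sum>u<n. l (Suc u)) (pr_perp (col_concat (Mmat p n l * Zmat p n) (Mmat p n l * Umat p n)))"
    by (rule pr_perp_nnd, rule carrier_matI) (simp_all add: col_concat_def Mmat_def)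
qed

lemma Tmat_carrier: "Tmat p t n d \<in> carrier_mat (n * p) t"
  unfolding Tmat_def by simp

lemma Fmat_carrier: "Fmat p t n d \<in> carrier_mat (n * p) t"
  unfolding Fmat_def by simp

lemma info_nnd_block: "nnd_block (C11 p t n d l) (C12 p t n d l) (C22 p t n d l) t t"
  unfolding C11_def C12_def C22_def by (rule nnd_block_congruence[OF Omat_nnd Tmat_carrier Fmat_carrier])

lemma C21_eq_transpose_C12: "C21 p t n d l = transpose_mat (C12 p t n d l)"
  using transpose_congruence[OF _ _ Tmat_carrier Fmat_carrier] Omat_nnd[of n p l]
  unfolding C12_def C21_def nnd_def by simp

lemma Cinfo_eq_schur_complement:
  "Cinfo p t n d l = schur_complement (C11 p t n d l) (C12 p t n d l) (C22 p t n d l)"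
  unfolding Cinfo_def schur_complement_def C21_eq_transpose_C12 ..

lemma finite_dropouts: "finite (dropouts p n)"
  unfolding dropouts_def by (rule finite_PiE) auto

lemma dprob_nonneg: "is_dropout_dist p a \<Longrightarrow> l \<in> dropouts p n \<Longrightarrow> 0 \<le> dprob n a l"
  unfolding dprob_def dropouts_def is_dropout_dist_def by (auto intro!: prod_nonneg)

lemma sum_dprob: "is_dropout_dist p a \<Longrightarrow> (\<Sum>l\<in>dropouts p n. dprob n a l) = 1"
  using prod_sum_PiE[of "{1..n}" "\<lambda>_. {1..p}" "\<lambda>_ k. a k"]
  unfolding dropouts_def dprob_def is_dropout_dist_def by simp

lemma Emat_eq_wsum_mat: "Emat p n m a C = wsum_mat m m (dropouts p n) (dprob n a) C"
  unfolding Emat_def wsum_mat_def ..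

lemma Cbar_eq_schur_complement:
  "Cbar p t n a d = schur_complement (Emat p n t a (C11 p t n d)) (Emat p n t a (C12 p t n d))
    (Emat p n t a (C22 p t n d))"
proof -
  have "Emat p n t a (C21 p t n d) = transpose_mat (Emat p n t a (C12 p t n d))"
    unfolding Emat_eq_wsum_mat C21_eq_transpose_C12
    by (rule transpose_wsum_mat[symmetric]) (rule nnd_block.B_carrier[OF info_nnd_block])
  then show ?thesis unfolding Cbar_def schur_complement_def by simp
qed

lemma phi0_le_phi1:
  assumes dist: "is_dropout_dist p a" and crit: "is_criterion t \<Phi>"
    and nonneg: "\<forall>C. nnd t C \<longrightarrow> 0 \<le> \<Phi> C"
  shows "phi0 p t n a \<Phi> d \<le> phi1 p t n a \<Phi> d"
proof -
  let ?W = "dropouts p n" and ?w = "dprob n a" and ?C = "Cinfo p t n d"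
  have w: "\<And>l. l \<in> ?W \<Longrightarrow> 0 \<le> ?w l" using dist by (rule dprob_nonneg)
  have C: "?C = (\<lambda>l. schur_complement (C11 p t n d l) (C12 p t n d l) (C22 p t n d l))"
    by (simp add: fun_eq_iff Cinfo_eq_schur_complement)
  have C_nnd: "\<And>l. nnd t (?C l)"
    unfolding C by (rule nnd_block.schur_complement_nnd[OF info_nnd_block])
  define E where "E = wsum_mat t t ?W ?w ?C"
  have E: "nnd t E" unfolding E_def using w C_nnd by (rule wsum_mat_nnd)
  have gap: "nnd t (Cbar p t n a d - E)"
    unfolding E_def C Cbar_eq_schur_complement Emat_eq_wsum_mat
    using w info_nnd_block by (rule schur_complement_wsum_mat_ge)
  have "phi0 p t n a \<Phi> d = (\<Sum>l\<in>?W. ?w l * \<Phi> (?C l))" unfolding phi0_def ..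
  also have "\<dots> \<le> \<Phi> E"
    unfolding E_def using crit finite_dropouts w sum_dprob[OF dist] C_nnd by (rule criterion_jensen)
  also have "\<dots> \<le> \<Phi> (E + (Cbar p t n a d - E))" by (rule criterion_mono[OF crit nonneg E gap])
  also have "E + (Cbar p t n a d - E) = Cbar p t n a d"
  proof -
    have "Cbar p t n a d \<in> carrier_mat t t" unfolding Cbar_def Emat_def by (rule carrier_matI) simp_all
    with E show ?thesis by (intro eq_matI) (auto simp: nnd_def)
  qed
  finally show ?thesis unfolding phi1_def .
qed

lemma phi0_nonneg:
  assumes "is_dropout_dist p a" and "\<forall>C. nnd t C \<longrightarrow> 0 \<le> \<Phi> C"
  shows "0 \<le> phi0 p t n a \<Phi> d"
  unfolding phi0_def Cinfo_eq_schur_complement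
  using assms dprob_nonneg nnd_block.schur_complement_nnd[OF info_nnd_block]
  by (auto intro!: sum_nonneg)

lemma ratio_product_le:
  fixes x y X Y :: real
  assumes "0 \<le> x" "x \<le> y" "x \<le> X" "X \<le> Y"
  shows "y / Y * (x / y) \<le> x / X"
proof (cases "y = 0")
  case False
  then have "y / Y * (x / y) = x / Y" by simp
  also have "\<dots> \<le> x / X" using assms by (cases "X = 0") (auto intro: divide_left_mono)
  finally show ?thesis .
qed (use assms in simp)

theorem lemma2p2:
  fixes p t n :: nat and a :: "nat \<Rightarrow> real" and \<Phi> :: "real mat \<Rightarrow> real"
    and d0s d1s :: "nat \<Rightarrow> nat \<Rightarrow> nat"
  assumes "is_dropout_dist p a"
    and "is_criterion t \<Phi>"
    and "\<forall>C. nnd t C \<longrightarrow> 0 \<le> \<Phi> C"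
    and "is_optimal p t n (phi0 p t n a \<Phi>) d0s"
    and "is_optimal p t n (phi1 p t n a \<Phi>) d1s"
  shows "(\<forall>d. is_design p t n d \<longrightarrow> phi0 p t n a \<Phi> d \<le> phi1 p t n a \<Phi> d)
    \<and> (\<forall>d. is_design p t n d \<longrightarrow>
          phi0 p t n a \<Phi> d / phi0 p t n a \<Phi> d0s
            \<ge> (phi1 p t n a \<Phi> d / phi1 p t n a \<Phi> d1s) * (phi0 p t n a \<Phi> d / phi1 p t n a \<Phi> d))
    \<and> (\<forall>d. is_optimal p t n (phi1 p t n a \<Phi>) d \<longrightarrow>
          phi0 p t n a \<Phi> d / phi0 p t n a \<Phi> d0s \<ge> phi0 p t n a \<Phi> d / phi1 p t n a \<Phi> d)"
proof -
  let ?\<phi>0 = "phi0 p t n a \<Phi>" and ?\<phi>1 = "phi1 p t n a \<Phi>"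
  have le: "?\<phi>0 d \<le> ?\<phi>1 d" for d using phi0_le_phi1[OF assms(1-3)] .
  have opt0: "?\<phi>0 d \<le> ?\<phi>0 d0s" and opt1: "?\<phi>1 d \<le> ?\<phi>1 d1s" if "is_design p t n d" for d
    using assms(4,5) that unfolding is_optimal_def by auto
  have "is_design p t n d0s" using assms(4) unfolding is_optimal_def by simp
  then have "?\<phi>0 d0s \<le> ?\<phi>1 d1s" using le opt1 order_trans by blast
  then have eff: "?\<phi>1 d / ?\<phi>1 d1s * (?\<phi>0 d / ?\<phi>1 d) \<le> ?\<phi>0 d / ?\<phi>0 d0s" if "is_design p t n d" for d
    using ratio_product_le phi0_nonneg[OF assms(1,3)] le opt0[OF that] by blast
  show ?thesis
  proof (intro conjI allI impI)
    fix d
    show "?\<phi>0 d \<le> ?\<phi>1 d" by (rule le)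
    assume "is_design p t n d"
    then show "?\<phi>1 d / ?\<phi>1 d1s * (?\<phi>0 d / ?\<phi>1 d) \<le> ?\<phi>0 d / ?\<phi>0 d0s" by (rule eff)
  next
    fix d assume d: "is_optimal p t n ?\<phi>1 d"
    then have "?\<phi>1 d = ?\<phi>1 d1s" using assms(5) unfolding is_optimal_def by (auto intro: antisym)
    then have "?\<phi>1 d / ?\<phi>1 d1s * (?\<phi>0 d / ?\<phi>1 d) = ?\<phi>0 d / ?\<phi>1 d" by (cases "?\<phi>1 d = 0") auto
    then show "?\<phi>0 d / ?\<phi>1 d \<le> ?\<phi>0 d / ?\<phi>0 d0s" using eff d unfolding is_optimal_def by metis
  qed
qed

end
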